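(* Let $P \subseteq \mathbb{R}^7$ be an associative $3$-plane. Then the two $\mathfrak{so}(3)$ subalgebras $\Lambda^2(P)$ and $\Psi(P)$ of $\Lambda^2(\mathbb{R}^7)$ commute: if $X \in \Lambda^2(P)$ and $Y \in \Psi(P)$ then $[X,Y] = 0$.
   Context: Equip $\mathbb{R}^7$ with its standard inner product, orientation and basis. Let $\varphi = e_{123} - e_{167} - e_{527} - e_{563} - e_{415} - e_{426} - e_{437}$ ($e_{ijk} = e_i\wedge e_j\wedge e_k$), $\psi = \star\varphi = e_{4567} - e_{4523} - e_{4163} - e_{4127} - e_{2637} - e_{1537} - e_{1526}$, and define $\times$ by $\langle u \times v, w \rangle = \varphi(u,v,w)$. A $3$-dimensional subspace is associative if closed under $\times$. For $u,v$: $u\wedge v$ is the 2-form $(a,b)\mapsto \langle u,a\rangle\langle v,b\rangle - \langle u,b\rangle\langle v,a\rangle$, and $\Psi_{uv}$ is the 2-form $(a,b)\mapsto\psi(u,v,a,b)$. $\Lambda^2(P) = \mathrm{Span}\{u\wedge v: u,v\in P\}$, $\Psi(P) = \mathrm{Span}\{\Psi_{uv} : u,v\in P\}$. Skew bilinear forms are identified with skew-adjoint operators via $X(a,b) = \langle X(a),b\rangle$, and the bracket is the commutator. *)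

theory Defs
  imports "HOL-Analysis.Analysis"
begin

text \<open>R^7 is real^7. The standard basis vector e_i (i = 1..7) is the i-th coordinate;
  coordinate i is stored at index (of_nat i :: 7), a bijection {1..7} -> UNIV.\<close>

definition comp7 :: "real^7 \<Rightarrow> nat \<Rightarrow> real" where
  "comp7 x i = x $ (of_nat i :: 7)"

text \<open>Elementary k-form e_{i1...ik} evaluated on vectors v_1..v_k:
  det [ (v_a)_{i_b} ].\<close>
definition eform :: "nat list \<Rightarrow> (real^7) list \<Rightarrow> real" where
  "eform I vs = (\<Sum>p | p permutes {..<length I}.
      of_int (sign p) * (\<Prod>m<length I. comp7 (vs ! (p m)) (I ! m)))"

definition phi :: "real^7 \<Rightarrow> real^7 \<Rightarrow> real^7 \<Rightarrow> real" where
  "phi u v w = (let vs = [u, v, w] in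
     eform [1,2,3] vs - eform [1,6,7] vs - eform [5,2,7] vs - eform [5,6,3] vs
     - eform [4,1,5] vs - eform [4,2,6] vs - eform [4,3,7] vs)"

definition psi :: "real^7 \<Rightarrow> real^7 \<Rightarrow> real^7 \<Rightarrow> real^7 \<Rightarrow> real" where
  "psi u v a b = (let vs = [u, v, a, b] in
     eform [4,5,6,7] vs - eform [4,5,2,3] vs - eform [4,1,6,3] vs - eform [4,1,2,7] vs
     - eform [2,6,3,7] vs - eform [1,5,3,7] vs - eform [1,5,2,6] vs)"

text \<open>Cross product: <u x v, w> = phi(u,v,w).\<close>
definition cross7 :: "real^7 \<Rightarrow> real^7 \<Rightarrow> real^7" where
  "cross7 u v = (\<chi> i. phi u v (axis i 1))"

definition associative :: "(real^7) set \<Rightarrow> bool" where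
  "associative P \<longleftrightarrow> subspace P \<and> dim P = 3 \<and> (\<forall>u\<in>P. \<forall>v\<in>P. cross7 u v \<in> P)"

definition wedge2 :: "real^7 \<Rightarrow> real^7 \<Rightarrow> real^7 \<Rightarrow> real^7 \<Rightarrow> real" where
  "wedge2 u v a b = (u \<bullet> a) * (v \<bullet> b) - (u \<bullet> b) * (v \<bullet> a)"

definition Psi2 :: "real^7 \<Rightarrow> real^7 \<Rightarrow> real^7 \<Rightarrow> real^7 \<Rightarrow> real" where
  "Psi2 u v a b = psi u v a b"

text \<open>Identification of a bilinear form B with the operator X given by
  B(a,b) = <X a, b>, represented as a matrix (X a = M *v a).\<close>
definition form_op :: "(real^7 \<Rightarrow> real^7 \<Rightarrow> real) \<Rightarrow> real^7^7" where
  "form_op B = (\<chi> j k. B (axis k 1) (axis j 1))"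

definition Lambda2 :: "(real^7) set \<Rightarrow> (real^7^7) set" where
  "Lambda2 P = span {form_op (wedge2 u v) | u v. u \<in> P \<and> v \<in> P}"

definition PsiP :: "(real^7) set \<Rightarrow> (real^7^7) set" where
  "PsiP P = span {form_op (Psi2 u v) | u v. u \<in> P \<and> v \<in> P}"

definition bracket :: "real^7^7 \<Rightarrow> real^7^7 \<Rightarrow> real^7^7" where
  "bracket X Y = X ** Y - Y ** X"

end

theory Submission
  imports Defs
begin

text \<open>Write \<open>w = u \<times> v\<close> for orthonormal \<open>u, v\<close> in the associative plane \<open>P\<close>; then \<open>u, v, w\<close> is
  an orthonormal basis of \<open>P\<close>, and the polynomial identity \<open>\<psi>(u, v, u \<times> v, \<cdot>) = 0\<close> together with
  multilinearity and skew-symmetry of \<open>\<psi>\<close> shows \<open>\<psi>(a, b, c, \<cdot>) = 0\<close> for all \<open>a, b, c \<in> P\<close>.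
  Hence for \<open>a, b \<in> P\<close> the skew operator \<open>\<Psi>\<^sub>a\<^sub>b\<close> kills \<open>P\<close> and, being skew, maps into \<open>P\<^sup>\<bottom>\<close>,
  whereas \<open>u \<and> v\<close> (\<open>u, v \<in> P\<close>) maps into \<open>P\<close> and kills \<open>P\<^sup>\<bottom>\<close>. So both products of the two
  operators vanish, and bilinearity of the bracket extends this to the spans.\<close>

lemma eform_3:
  "eform [i,j,k] [a,b,c] =
     comp7 a i * comp7 b j * comp7 c k - comp7 b i * comp7 a j * comp7 c k
   - comp7 c i * comp7 b j * comp7 a k - comp7 a i * comp7 c j * comp7 b k
   + comp7 b i * comp7 c j * comp7 a k + comp7 c i * comp7 a j * comp7 b k"
proof -
  have indices: "{..<length [i,j,k]} = insert 0 (insert 1 (insert (2::nat) {}))" by auto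
  have "finite {1, 2::nat}" "0 \<notin> {1, 2::nat}" "finite {2::nat}" "1 \<notin> {2::nat}" by auto
  note expand = sum_over_permutations_insert[OF this(1,2)] sum_over_permutations_insert[OF this(3,4)]
  show ?thesis
    unfolding eform_def indices expand permutes_sing
    by (simp add: sign_swap_id permutation_swap_id sign_compose permutation_compose sign_id
        swap_id_eq lessThan_Suc numeral_eq_Suc algebra_simps)
qed

lemma eform_4:
  "eform [i,j,k,l] [a,b,c,d] =
     comp7 a i * comp7 b j * comp7 c k * comp7 d l - comp7 a i * comp7 b j * comp7 d k * comp7 c l
   - comp7 a i * comp7 c j * comp7 b k * comp7 d l + comp7 a i * comp7 c j * comp7 d k * comp7 b l
   + comp7 a i * comp7 d j * comp7 b k * comp7 c l - comp7 a i * comp7 d j * comp7 c k * comp7 b l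
   - comp7 b i * comp7 a j * comp7 c k * comp7 d l + comp7 b i * comp7 a j * comp7 d k * comp7 c l
   + comp7 b i * comp7 c j * comp7 a k * comp7 d l - comp7 b i * comp7 c j * comp7 d k * comp7 a l
   - comp7 b i * comp7 d j * comp7 a k * comp7 c l + comp7 b i * comp7 d j * comp7 c k * comp7 a l
   + comp7 c i * comp7 a j * comp7 b k * comp7 d l - comp7 c i * comp7 a j * comp7 d k * comp7 b l
   - comp7 c i * comp7 b j * comp7 a k * comp7 d l + comp7 c i * comp7 b j * comp7 d k * comp7 a l
   + comp7 c i * comp7 d j * comp7 a k * comp7 b l - comp7 c i * comp7 d j * comp7 b k * comp7 a l
   - comp7 d i * comp7 a j * comp7 b k * comp7 c l + comp7 d i * comp7 a j * comp7 c k * comp7 b l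
   + comp7 d i * comp7 b j * comp7 a k * comp7 c l - comp7 d i * comp7 b j * comp7 c k * comp7 a l
   - comp7 d i * comp7 c j * comp7 a k * comp7 b l + comp7 d i * comp7 c j * comp7 b k * comp7 a l"
proof -
  have indices: "{..<length [i,j,k,l]} = insert 0 (insert 1 (insert 2 (insert (3::nat) {})))"
    by auto
  have "finite {1, 2, 3::nat}" "0 \<notin> {1, 2, 3::nat}" "finite {2, 3::nat}" "1 \<notin> {2, 3::nat}"
    "finite {3::nat}" "2 \<notin> {3::nat}" by auto
  note expand = sum_over_permutations_insert[OF this(1,2)] sum_over_permutations_insert[OF this(3,4)]
    sum_over_permutations_insert[OF this(5,6)]
  show ?thesis
    unfolding eform_def indices expand permutes_sing
    by (simp add: sign_swap_id permutation_swap_id sign_compose permutation_compose sign_id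
        swap_id_eq lessThan_Suc numeral_eq_Suc algebra_simps)
qed

lemma cross7_components:
  "cross7 u v $ 1 = u$2 * v$3 - u$3 * v$2 + u$4 * v$5 - u$5 * v$4 - u$6 * v$7 + u$7 * v$6"
  "cross7 u v $ 2 = - u$1 * v$3 + u$3 * v$1 + u$4 * v$6 + u$5 * v$7 - u$6 * v$4 - u$7 * v$5"
  "cross7 u v $ 3 = u$1 * v$2 - u$2 * v$1 + u$4 * v$7 - u$5 * v$6 + u$6 * v$5 - u$7 * v$4"
  "cross7 u v $ 4 = - u$1 * v$5 - u$2 * v$6 - u$3 * v$7 + u$5 * v$1 + u$6 * v$2 + u$7 * v$3"
  "cross7 u v $ 5 = u$1 * v$4 - u$2 * v$7 + u$3 * v$6 - u$4 * v$1 - u$6 * v$3 + u$7 * v$2"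
  "cross7 u v $ 6 = u$1 * v$7 + u$2 * v$4 - u$3 * v$5 - u$4 * v$2 + u$5 * v$3 - u$7 * v$1"
  "cross7 u v $ 7 = - u$1 * v$6 + u$2 * v$5 + u$3 * v$4 - u$4 * v$3 - u$5 * v$2 + u$6 * v$1"
  by (simp_all add: cross7_def phi_def eform_3 comp7_def axis_def)

lemma sum_UNIV_7: "(\<Sum>i\<in>(UNIV :: 7 set). f i) = f 1 + f 2 + f 3 + f 4 + f 5 + f 6 + f 7"
proof -
  have distinct: "distinct [1, 2, 3, 4, 5, 6, 7 :: 7]" by simp
  then have "card (set [1, 2, 3, 4, 5, 6, 7 :: 7]) = CARD(7)"
    by (simp only: distinct_card) simp
  then have "UNIV = set [1, 2, 3, 4, 5, 6, 7 :: 7]"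
    using card_subset_eq[of UNIV "set [1, 2, 3, 4, 5, 6, 7 :: 7]"] by simp
  then show ?thesis
    using sum.distinct_set_conv_list[OF distinct, of f] by (simp add: add.assoc)
qed

lemma inner_vec_7:
  "x \<bullet> (y::real^7) = x$1*y$1 + x$2*y$2 + x$3*y$3 + x$4*y$4 + x$5*y$5 + x$6*y$6 + x$7*y$7"
  unfolding inner_vec_def sum_UNIV_7 by simp

lemma inner_cross7_left: "cross7 u v \<bullet> u = 0"
  unfolding inner_vec_7 cross7_components by algebra

lemma inner_cross7_right: "cross7 u v \<bullet> v = 0"
  unfolding inner_vec_7 cross7_components by algebra

lemma inner_cross7_self: "cross7 u v \<bullet> cross7 u v = (u \<bullet> u) * (v \<bullet> v) - (u \<bullet> v)\<^sup>2"
  unfolding inner_vec_7 cross7_components by algebra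

lemma linear_psi_1: "linear (\<lambda>x. psi x b c d)"
  by (intro linearI; unfold psi_def Let_def eform_4 comp7_def vector_add_component
      vector_scaleR_component real_scaleR_def; algebra)

lemma linear_psi_2: "linear (\<lambda>x. psi a x c d)"
  by (intro linearI; unfold psi_def Let_def eform_4 comp7_def vector_add_component
      vector_scaleR_component real_scaleR_def; algebra)

lemma linear_psi_3: "linear (\<lambda>x. psi a b x d)"
  by (intro linearI; unfold psi_def Let_def eform_4 comp7_def vector_add_component
      vector_scaleR_component real_scaleR_def; algebra)

lemma psi_swap_12: "psi b a c d = - psi a b c d"
  unfolding psi_def Let_def eform_4 by algebra

lemma psi_swap_23: "psi a c b d = - psi a b c d"
  unfolding psi_def Let_def eform_4 by algebra

lemma psi_swap_34: "psi a b d c = - psi a b c d"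
  unfolding psi_def Let_def eform_4 by algebra

lemma psi_cross7_eq_0: "psi u v (cross7 u v) w = 0"
  unfolding psi_def Let_def eform_4 comp7_def
  by (simp add: cross7_components del: vector_add_component vector_minus_component) algebra

lemma psi_eq_0_on_span:
  assumes "\<And>x y z. x \<in> S \<Longrightarrow> y \<in> S \<Longrightarrow> z \<in> S \<Longrightarrow> psi x y z w = 0"
    and "a \<in> span S" "b \<in> span S" "c \<in> span S"
  shows "psi a b c w = 0"
proof -
  have "psi a y z w = 0" if "y \<in> S" "z \<in> S" for y z
    using linear_eq_0_on_span[OF linear_psi_1 _ \<open>a \<in> span S\<close>] assms(1) that by blast
  then have "psi a b z w = 0" if "z \<in> S" for z
    using linear_eq_0_on_span[OF linear_psi_2 _ \<open>b \<in> span S\<close>] that by blast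
  then show ?thesis
    using linear_eq_0_on_span[OF linear_psi_3 _ \<open>c \<in> span S\<close>] by blast
qed

lemma psi_eq_0_on_cross7_triple:
  assumes "x \<in> {u, v, cross7 u v}" "y \<in> {u, v, cross7 u v}" "z \<in> {u, v, cross7 u v}"
  shows "psi x y z w = 0"
proof -
  have repeated_12: "psi a a b w = 0" for a b
    using psi_swap_12[of a a b w] by linarith
  have repeated_23: "psi a b b w = 0" for a b
    using psi_swap_23[of a b b w] by linarith
  have repeated_13: "psi a b a w = 0" for a b
    using psi_swap_23[of a a b w] repeated_12[of a b] by linarith
  define c where "c = cross7 u v"
  have "psi u v c w = 0"
    unfolding c_def by (rule psi_cross7_eq_0)
  then have "psi v u c w = 0" "psi u c v w = 0"
    using psi_swap_12[of u v c w] psi_swap_23[of u v c w] by simp_all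
  then have permuted: "psi u v c w = 0" "psi v u c w = 0" "psi u c v w = 0"
    "psi v c u w = 0" "psi c u v w = 0" "psi c v u w = 0"
    using \<open>psi u v c w = 0\<close> psi_swap_23[of v u c w] psi_swap_12[of u c v w] psi_swap_12[of v c u w]
    by simp_all
  from assms have "(x = u \<or> x = v \<or> x = c) \<and> (y = u \<or> y = v \<or> y = c) \<and> (z = u \<or> z = v \<or> z = c)"
    unfolding c_def by blast
  then show ?thesis
    by (elim conjE disjE) (simp_all only: permuted repeated_12 repeated_13 repeated_23)
qed

lemma associative_eq_span_cross7:
  assumes "associative P"
  obtains u v where "P = span {u, v, cross7 u v}"
proof -
  have "subspace P" and "dim P = 3"
    and cross_closed: "\<And>u v. u \<in> P \<Longrightarrow> v \<in> P \<Longrightarrow> cross7 u v \<in> P"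
    using assms unfolding associative_def by auto
  obtain B where "B \<subseteq> P" "pairwise orthogonal B" "\<And>x. x \<in> B \<Longrightarrow> norm x = 1" "card B = 3"
    using orthonormal_basis_subspace[OF \<open>subspace P\<close>] \<open>dim P = 3\<close> by metis
  moreover from \<open>card B = 3\<close> obtain u v x where "B = {u, v, x}" "u \<noteq> v"
    by (auto simp: card_3_iff)
  ultimately have "u \<in> P" "v \<in> P" "u \<bullet> u = 1" "v \<bullet> v = 1" "u \<bullet> v = 0"
    by (auto simp: pairwise_def orthogonal_def norm_eq_1)
  define w where "w = cross7 u v"
  have "w \<in> P" "w \<bullet> w = 1" "w \<bullet> u = 0" "w \<bullet> v = 0"
    using cross_closed[OF \<open>u \<in> P\<close> \<open>v \<in> P\<close>] inner_cross7_self[of u v] inner_cross7_left[of u v]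
      inner_cross7_right[of u v] \<open>u \<bullet> u = 1\<close> \<open>v \<bullet> v = 1\<close> \<open>u \<bullet> v = 0\<close>
    unfolding w_def by simp_all
  then have "w \<noteq> u" "w \<noteq> v"
    using \<open>u \<bullet> u = 1\<close> \<open>u \<bullet> v = 0\<close> by auto
  let ?S = "{u, v, w}"
  have "?S \<subseteq> P"
    using \<open>u \<in> P\<close> \<open>v \<in> P\<close> \<open>w \<in> P\<close> by blast
  have "pairwise orthogonal ?S"
    using \<open>u \<bullet> v = 0\<close> \<open>w \<bullet> u = 0\<close> \<open>w \<bullet> v = 0\<close>
    by (auto simp: pairwise_insert orthogonal_def inner_commute)
  moreover have "0 \<notin> ?S"
    using \<open>u \<bullet> u = 1\<close> \<open>v \<bullet> v = 1\<close> \<open>w \<bullet> w = 1\<close> by auto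
  ultimately have "independent ?S"
    by (rule pairwise_orthogonal_independent)
  moreover have "dim P \<le> card ?S"
    using \<open>dim P = 3\<close> \<open>u \<noteq> v\<close> \<open>w \<noteq> u\<close> \<open>w \<noteq> v\<close> by auto
  ultimately have "P \<subseteq> span ?S"
    by (rule card_ge_dim_independent[OF \<open>?S \<subseteq> P\<close>])
  moreover have "span ?S \<subseteq> P"
    using \<open>?S \<subseteq> P\<close> \<open>subspace P\<close> by (simp add: span_minimal)
  ultimately have "P = span {u, v, cross7 u v}"
    unfolding w_def by (rule antisym)
  then show ?thesis
    by (rule that)
qed

lemma associative_psi_eq_0:
  assumes "associative P" "a \<in> P" "b \<in> P" "c \<in> P"
  shows "psi a b c w = 0"
proof -
  obtain u v where P: "P = span {u, v, cross7 u v}"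
    using associative_eq_span_cross7[OF assms(1)] by blast
  have "a \<in> span {u, v, cross7 u v}" "b \<in> span {u, v, cross7 u v}" "c \<in> span {u, v, cross7 u v}"
    using assms(2-4) unfolding P by simp_all
  then show ?thesis
    by (rule psi_eq_0_on_span[rotated]) (rule psi_eq_0_on_cross7_triple)
qed

lemma matrix_vector_mult_form_op:
  assumes "\<And>y. linear (\<lambda>x. B x y)"
  shows "form_op B *v x = (\<chi> j. B x (axis j 1))"
proof -
  have "B x y = (\<Sum>k\<in>UNIV. x$k * B (axis k 1) y)" for y
  proof -
    have "B x y = B (\<Sum>k\<in>UNIV. x$k *\<^sub>R axis k 1) y"
      using basis_expansion[of x] by (simp add: scalar_mult_eq_scaleR)
    also have "\<dots> = (\<Sum>k\<in>UNIV. x$k * B (axis k 1) y)"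
      by (simp add: linear_sum[OF assms] linear_scale[OF assms])
    finally show ?thesis .
  qed
  then show ?thesis
    by (simp add: vec_eq_iff matrix_vector_mult_def form_op_def mult.commute)
qed

lemma matrix_vector_mult_form_op_wedge2:
  "form_op (wedge2 u v) *v x = (u \<bullet> x) *\<^sub>R v - (v \<bullet> x) *\<^sub>R u"
proof -
  have "linear (\<lambda>x. wedge2 u v x y)" for y
    by (rule linearI) (simp_all add: wedge2_def inner_add_left algebra_simps)
  then show ?thesis
    by (simp add: matrix_vector_mult_form_op vec_eq_iff wedge2_def inner_axis inner_commute mult.commute)
qed

lemma matrix_vector_mult_form_op_Psi2:
  "form_op (Psi2 a b) *v x = (\<chi> j. psi a b x (axis j 1))"
  unfolding Psi2_def by (rule matrix_vector_mult_form_op) (rule linear_psi_3)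

lemma transpose_form_op_Psi2: "transpose (form_op (Psi2 a b)) = - form_op (Psi2 a b)"
  by (simp add: vec_eq_iff transpose_def form_op_def Psi2_def) (metis psi_swap_34)

lemma matrix_vector_mult_minus_left: "(- A) *v x = - (A *v (x::'a::ring_1^'n))"
  by (simp add: matrix_vector_mult_def vec_eq_iff sum_negf)

lemma bracket_form_op_wedge2_eq_0:
  assumes "transpose Y = - Y" and "Y *v u = 0" and "Y *v v = 0"
  shows "bracket (form_op (wedge2 u v)) Y = 0"
proof -
  have orthogonal_image: "z \<bullet> (Y *v x) = 0" if "Y *v z = 0" for z x
  proof -
    have "z \<bullet> (Y *v x) = (transpose Y *v z) \<bullet> x"
      by (simp add: dot_lmul_matrix)
    also have "\<dots> = 0"
      using \<open>transpose Y = - Y\<close> \<open>Y *v z = 0\<close> matrix_vector_mult_minus_left[of Y z] by simp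
    finally show ?thesis .
  qed
  have "(form_op (wedge2 u v) ** Y) *v x = 0" for x
    using orthogonal_image[OF \<open>Y *v u = 0\<close>] orthogonal_image[OF \<open>Y *v v = 0\<close>]
    by (simp add: matrix_vector_mul_assoc[symmetric] matrix_vector_mult_form_op_wedge2)
  moreover have "(Y ** form_op (wedge2 u v)) *v x = 0" for x
    using assms(2,3)
    by (simp add: matrix_vector_mul_assoc[symmetric] matrix_vector_mult_form_op_wedge2
        matrix_vector_mult_diff_distrib matrix_vector_mult_scaleR)
  ultimately show ?thesis
    by (simp add: bracket_def matrix_eq matrix_vector_mult_diff_rdistrib)
qed

lemma matrix_add_rdistrib: "((A::'a::semiring_1^'n^'m) + B) ** C = A ** C + B ** C"
  by (simp add: vec_eq_iff matrix_matrix_mult_def sum.distrib distrib_right)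

lemma linear_bracket_left: "linear (\<lambda>X. bracket X Y)"
  by (rule linearI)
    (simp_all add: bracket_def matrix_add_rdistrib matrix_add_ldistrib scalar_matrix_assoc[symmetric]
      matrix_scalar_ac scaleR_diff_right)

lemma linear_bracket_right: "linear (\<lambda>Y. bracket X Y)"
  by (rule linearI)
    (simp_all add: bracket_def matrix_add_rdistrib matrix_add_ldistrib scalar_matrix_assoc[symmetric]
      matrix_scalar_ac scaleR_diff_right)

theorem proposition4p7:
  fixes P :: "(real^7) set" and X Y :: "real^7^7"
  assumes "associative P"
    and "X \<in> Lambda2 P"
    and "Y \<in> PsiP P"
  shows "bracket X Y = 0"
proof -
  have generators_commute: "bracket (form_op (wedge2 u v)) (form_op (Psi2 a b)) = 0"
    if "u \<in> P" "v \<in> P" "a \<in> P" "b \<in> P" for u v a b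
  proof (rule bracket_form_op_wedge2_eq_0)
    show "transpose (form_op (Psi2 a b)) = - form_op (Psi2 a b)"
      by (rule transpose_form_op_Psi2)
    show "form_op (Psi2 a b) *v u = 0" "form_op (Psi2 a b) *v v = 0"
      using associative_psi_eq_0[OF \<open>associative P\<close>] that
      by (simp_all add: matrix_vector_mult_form_op_Psi2 vec_eq_iff)
  qed
  have wedge_commutes: "bracket (form_op (wedge2 u v)) Y = 0" if "u \<in> P" "v \<in> P" for u v
    by (rule linear_eq_0_on_span[OF linear_bracket_right _ \<open>Y \<in> PsiP P\<close>[unfolded PsiP_def]])
      (auto intro: generators_commute that)
  show ?thesis
    by (rule linear_eq_0_on_span[OF linear_bracket_left _ \<open>X \<in> Lambda2 P\<close>[unfolded Lambda2_def]])
      (auto intro: wedge_commutes)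
qed

end
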